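(* Consider the constant-resource type system, and assume the program is well-typed w.r.t. the signature $\Sigma$ in that system. Let $X\subseteq\mathrm{dom}(\Gamma)$. Suppose $\models E:\Gamma$, $E\vdash e\Downarrow v$, $\Sigma;\Gamma\vdash^{q}_{q'}e:A$ is derivable in the constant-resource type system, $\curlyvee(A\mid A,A)$ holds, and $\curlyvee(\Gamma(x)\mid\Gamma(x),\Gamma(x))$ holds for every $x\in\mathrm{dom}(\Gamma)\setminus X$. Then $e$ is constant resource w.r.t. $X$, i.e. $\mathrm{const}_X(e)$ holds (with respect to the base context $|\Gamma|$).
   Context: Base types: $T ::= \mathsf{unit}\mid\mathsf{bool}\mid\mathsf{int}\mid L(T)\mid T*T$. Values: $v ::= () \mid \mathsf{true}\mid\mathsf{false}\mid n\ (n\in\mathbb Z)\mid [v_1,\dots,v_n]\ (n\ge 0$, the empty list being $\mathsf{nil})\mid (v_1,v_2)$. Value typing $\models v:T$: $()$ has type $\mathsf{unit}$, booleans have type $\mathsf{bool}$, integers have type $\mathsf{int}$, $(v_1,v_2):T_1*T_2$ if $\models v_i:T_i$, and $[v_1,\dots,v_n]:L(T)$ if every $\models v_i:T$ (so $\mathsf{nil}$ has every list type). Expressions (let-normal form; $x,x_i$ are variables, $f$ function identifiers): $e ::= () \mid \mathsf{true}\mid \mathsf{false}\mid n\mid x\mid \mathrm{op}_\diamond(x_1,x_2)\mid \mathrm{app}(f,x)\mid \mathrm{if}(x,e_t,e_f)\mid \mathrm{let}(x,e_1,x.e_2)\mid \mathrm{pair}(x_1,x_2)\mid \mathrm{match}(x,(x_1,x_2).e)\mid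 \mathsf{nil}\mid \mathrm{cons}(x_1,x_2)\mid\mathrm{match}(x,e_1,(x_h,x_t).e_2)\mid\mathrm{share}(x,(x_1,x_2).e)$, with $\diamond\in\{+,-,*,\mathrm{div},\mathrm{mod},=,<>,<,>,\mathrm{and},\mathrm{or}\}$. A program fixes for each function identifier $f$ a body $e_f$ with a single parameter variable $y^f$. An environment $E$ is a finite map from variables to values. Cost semantics: fix arbitrary rational constants $K^{\mathrm{unit}},K^{\mathrm{bool}},K^{\mathrm{int}},K^{\mathrm{nil}},K^{\mathrm{var}},K^{\mathrm{op}},K^{\mathrm{app}},K^{\mathrm{let}},K^{\mathrm{cond}},K^{\mathrm{pair}},K^{\mathrm{matchP}},K^{\mathrm{cons}},K^{\mathrm{matchN}},K^{\mathrm{matchL}}$. The judgement $E\vdash^{q}_{q'} e\Downarrow v$ (all counters $q,q'$ occurring in derivations are in $\mathbb Q_{\ge0}$) is defined inductively: $E\vdash^{q+K^{c}}_{q}c\Downarrow c$ for constants $c\in\{(),\mathsf{true},\mathsf{false},n,\mathsf{nil}\}$ with the corresponding constant $K^{\mathrm{unit}},K^{\mathrm{bool}},K^{\mathrm{int}},K^{\mathrm{nil}}$; $E\vdash^{q+K^{\mathrm{var}}}_q x\Downarrow E(x)$ for $x\in\mathrm{dom}(E)$; $E\vdash^{q+K^{\mathrm{op}}}_q\mathrm{op}_\diamond(x_1,x_2)\Downarrow E(x_1)\diamond E(x_2)$; $E\vdash^{q+K^{\mathrm{pair}}}_q \mathrm{pair}(x_1,x_2)\Downarrow (E(x_1),E(x_2))$;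 $E\vdash^{q+K^{\mathrm{cons}}}_q\mathrm{cons}(x_h,x_t)\Downarrow[v_1,\dots,v_n]$ if $E(x_h)=v_1$ and $E(x_t)=[v_2,\dots,v_n]$; if $E[y^f\mapsto E(x)]\vdash^q_{q'}e_f\Downarrow v$ then $E\vdash^{q+K^{\mathrm{app}}}_{q'}\mathrm{app}(f,x)\Downarrow v$; if $E\vdash^{q-K^{\mathrm{let}}}_{q_1}e_1\Downarrow v_1$ and $E[x\mapsto v_1]\vdash^{q_1}_{q'}e_2\Downarrow v$ then $E\vdash^q_{q'}\mathrm{let}(x,e_1,x.e_2)\Downarrow v$; if $E(x)=\mathsf{true}$ and $E\vdash^{q-K^{\mathrm{cond}}}_{q'}e_t\Downarrow v$ (resp. $E(x)=\mathsf{false}$ and $E\vdash^{q-K^{\mathrm{cond}}}_{q'}e_f\Downarrow v$) then $E\vdash^q_{q'}\mathrm{if}(x,e_t,e_f)\Downarrow v$; if $E(x)=(v_1,v_2)$ and $E[x_1\mapsto v_1,x_2\mapsto v_2]\vdash^{q-K^{\mathrm{matchP}}}_{q'}e\Downarrow v$ then $E\vdash^q_{q'}\mathrm{match}(x,(x_1,x_2).e)\Downarrow v$; if $E(x)=\mathsf{nil}$ and $E\vdash^{q-K^{\mathrm{matchN}}}_{q'}e_1\Downarrow v$ then $E\vdash^q_{q'}\mathrm{match}(x,e_1,(x_h,x_t).e_2)\Downarrow v$; if $E(x)=[v_1,\dots,v_n]$ with $n\ge1$ and $E[x_h\mapsto v_1,x_t\mapsto[v_2,\dots,v_n]]\vdash^{q-K^{\mathrm{matchL}}}_{q'}e_2\Downarrow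 v$ then $E\vdash^q_{q'}\mathrm{match}(x,e_1,(x_h,x_t).e_2)\Downarrow v$; if $E(x)=v_1$ and $(E\setminus\{x\})[x_1\mapsto v_1,x_2\mapsto v_1]\vdash^q_{q'}e\Downarrow v$ then $E\vdash^q_{q'}\mathrm{share}(x,(x_1,x_2).e)\Downarrow v$. We write $E\vdash e\Downarrow v$ if $E\vdash^q_{q'}e\Downarrow v$ for some $q,q'$. Size equivalence of values $|v|\approx|u|$ is the least relation with: $|v|\approx|u|$ whenever $\models v:T$ and $\models u:T$ for some $T\in\{\mathsf{unit},\mathsf{bool},\mathsf{int}\}$; $|(v_1,v_2)|\approx|(u_1,u_2)|$ if $|v_i|\approx|u_i|$ for $i=1,2$; $|[v_1,\dots,v_n]|\approx|[u_1,\dots,u_m]|$ if $m=n$ and $|v_i|\approx|u_i|$ for all $i$. A base context $\Delta$ is a finite map from variables to base types; an environment $E$ is well-formed w.r.t. $\Delta$, written $\models E:\Delta$, if $\models E(x):\Delta(x)$ for all $x\in\mathrm{dom}(\Delta)$. For $X\subseteq\mathrm{dom}(\Delta)$ and well-formed $E_1,E_2$, $E_1\approx_X E_2$ means $|E_1(x)|\approx|E_2(x)|$ for all $x\in X$. An expression $e$ is constant resource w.r.t. $X\subseteq\mathrm{dom}(\Delta)$, written $\mathrm{const}_X(e)$, if for all $E_1,E_2$ with $\models E_i:\Delta$ and $E_1\approx_X E_2$: whenever $E_1\vdash^{p_1}_{p_1'}e\Downarrow v_1$ and $E_2\vdash^{p_2}_{p_2'}e\Downarrow v_2$, then $p_1-p_1'=p_2-p_2'$.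 Resource-annotated types: $A ::= \mathsf{unit}\mid\mathsf{bool}\mid\mathsf{int}\mid L^p(A)\mid A*A$ with $p\in\mathbb Q_{\ge0}$; $|A|$ denotes the base type obtained by erasing annotations. An annotated context $\Gamma$ is a finite map from variables to annotated types, $|\Gamma|$ its erasure; $\Gamma_1,\Gamma_2$ denotes the union of contexts with disjoint domains (contexts are unordered). $\models E:\Gamma$ means $\models E(x):|\Gamma(x)|$ for all $x\in\mathrm{dom}(\Gamma)$. Potential: $\Phi(v:A)=0$ for $A\in\{\mathsf{unit},\mathsf{bool},\mathsf{int}\}$; $\Phi((v_1,v_2):A_1*A_2)=\Phi(v_1:A_1)+\Phi(v_2:A_2)$; $\Phi([v_1,\dots,v_n]:L^p(A))=n\cdot p+\sum_{i=1}^n\Phi(v_i:A)$; $\Phi_E(\Gamma)=\sum_{x\in\mathrm{dom}(\Gamma)}\Phi(E(x):\Gamma(x))$. Sharing relation: $\curlyvee(A\mid A,A)$ for $A\in\{\mathsf{unit},\mathsf{bool},\mathsf{int}\}$; $\curlyvee(A*B\mid A_1*B_1,A_2*B_2)$ if $\curlyvee(A\mid A_1,A_2)$ and $\curlyvee(B\mid B_1,B_2)$; $\curlyvee(L^p(A)\mid L^{p_1}(A_1),L^{p_2}(A_2))$ if $\curlyvee(A\mid A_1,A_2)$ and $p=p_1+p_2$. A signature $\Sigma$ maps function identifiers to nonempty sets of annotated function types $A_1\xrightarrow{q/q'}A_2$ ($q,q'\in\mathbb Q_{\ge0}$). Typing judgements $\Sigma;\Gamma\vdash^{q}_{q'}e:A$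 with $q,q'\in\mathbb Q_{\ge0}$ (every annotation in a rule instance must be a nonnegative rational). Syntax-directed rules: $\Sigma;\emptyset\vdash^{K^{\mathrm{unit}}}_0():\mathsf{unit}$; $\Sigma;\emptyset\vdash^{K^{\mathrm{bool}}}_0 b:\mathsf{bool}$; $\Sigma;\emptyset\vdash^{K^{\mathrm{int}}}_0 n:\mathsf{int}$; $\Sigma;\emptyset\vdash^{K^{\mathrm{nil}}}_0\mathsf{nil}:L^p(A)$; $\Sigma;x:A\vdash^{K^{\mathrm{var}}}_0x:A$; $\Sigma;x_1:\mathsf{bool},x_2:\mathsf{bool}\vdash^{K^{\mathrm{op}}}_0\mathrm{op}_\diamond(x_1,x_2):\mathsf{bool}$ for $\diamond\in\{\mathrm{and},\mathrm{or}\}$; $\Sigma;x_1:\mathsf{int},x_2:\mathsf{int}\vdash^{K^{\mathrm{op}}}_0\mathrm{op}_\diamond(x_1,x_2):\mathsf{bool}$ for comparisons and $:\mathsf{int}$ for $+,-,*,\mathrm{div},\mathrm{mod}$; if $A_1\xrightarrow{q/q'}A_2\in\Sigma(f)$ then $\Sigma;x:A_1\vdash^{q+K^{\mathrm{app}}}_{q'}\mathrm{app}(f,x):A_2$; from $\Sigma;\Gamma_1\vdash^{q-K^{\mathrm{let}}}_{q_1}e_1:A_1$ and $\Sigma;\Gamma_2,x:A_1\vdash^{q_1}_{q'}e_2:A_2$ infer $\Sigma;\Gamma_1,\Gamma_2\vdash^q_{q'}\mathrm{let}(x,e_1,x.e_2):A_2$; from $\Sigma;\Gamma\vdash^{q-K^{\mathrm{cond}}}_{q'}e_t:A$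 and $\Sigma;\Gamma\vdash^{q-K^{\mathrm{cond}}}_{q'}e_f:A$ infer $\Sigma;\Gamma,x:\mathsf{bool}\vdash^q_{q'}\mathrm{if}(x,e_t,e_f):A$; $\Sigma;x_1:A_1,x_2:A_2\vdash^{K^{\mathrm{pair}}}_0\mathrm{pair}(x_1,x_2):A_1*A_2$; from $\Sigma;\Gamma,x_1:A_1,x_2:A_2\vdash^{q-K^{\mathrm{matchP}}}_{q'}e:A$ infer $\Sigma;\Gamma,x:A_1*A_2\vdash^q_{q'}\mathrm{match}(x,(x_1,x_2).e):A$; $\Sigma;x_h:A,x_t:L^p(A)\vdash^{p+K^{\mathrm{cons}}}_0\mathrm{cons}(x_h,x_t):L^p(A)$; from $\Sigma;\Gamma\vdash^{q-K^{\mathrm{matchN}}}_{q'}e_1:B$ and $\Sigma;\Gamma,x_h:A,x_t:L^p(A)\vdash^{q+p-K^{\mathrm{matchL}}}_{q'}e_2:B$ infer $\Sigma;\Gamma,x:L^p(A)\vdash^q_{q'}\mathrm{match}(x,e_1,(x_h,x_t).e_2):B$; from $\Sigma;\Gamma,x_1:A_1,x_2:A_2\vdash^q_{q'}e:B$ and $\curlyvee(A\mid A_1,A_2)$ infer $\Sigma;\Gamma,x:A\vdash^q_{q'}\mathrm{share}(x,(x_1,x_2).e):B$. Structural rules of the constant-resource system: (Relax) from $\Sigma;\Gamma\vdash^p_{p'}e:A$, $q\ge p$ and $q-p=q'-p'$ infer $\Sigma;\Gamma\vdash^q_{q'}e:A$; (Weakening) from $\Sigma;\Gamma\vdash^q_{q'}e:B$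 and $\curlyvee(A\mid A,A)$ infer $\Sigma;\Gamma,x:A\vdash^q_{q'}e:B$. The program is well-typed w.r.t. $\Sigma$ in this system if for every $f$ and every $A_1\xrightarrow{q/q'}A_2\in\Sigma(f)$, $\Sigma;y^f:A_1\vdash^q_{q'}e_f:A_2$ is derivable. *)

theory Defs
  imports Complex_Main
begin

type_synonym var = string
type_synonym fname = string

datatype bty = TUnit | TBool | TInt | TList bty | TProd bty bty

datatype val = VUnit | VBool bool | VInt int | VList "val list" | VPair val val

inductive vty :: "val \<Rightarrow> bty \<Rightarrow> bool" where
  "vty VUnit TUnit"
| "vty (VBool b) TBool"
| "vty (VInt n) TInt"
| "vty v1 T1 \<Longrightarrow> vty v2 T2 \<Longrightarrow> vty (VPair v1 v2) (TProd T1 T2)"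
| "(\<forall>w\<in>set ws. vty w T) \<Longrightarrow> vty (VList ws) (TList T)"

datatype binop = OAdd | OSub | OMul | ODiv | OMod | OEq | ONeq | OLt | OGt | OAnd | OOr

datatype expr =
    EUnit | ETrue | EFalse | EInt int | EVar var
  | EOp binop var var
  | EApp fname var
  | EIf var expr expr
  | ELet var expr expr
  | EPair var var
  | EMatchP var var var expr    \<comment> \<open>match(x, (x1,x2).e)\<close>
  | ENil
  | ECons var var
  | EMatchL var expr var var expr  \<comment> \<open>match(x, e1, (xh,xt).e2)\<close>
  | EShare var var var expr     \<comment> \<open>share(x, (x1,x2).e)\<close>

fun eval_op :: "binop \<Rightarrow> val \<Rightarrow> val \<Rightarrow> val option" where
  "eval_op OAdd (VInt a) (VInt b) = Some (VInt (a + b))"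
| "eval_op OSub (VInt a) (VInt b) = Some (VInt (a - b))"
| "eval_op OMul (VInt a) (VInt b) = Some (VInt (a * b))"
| "eval_op ODiv (VInt a) (VInt b) = Some (VInt (a div b))"
| "eval_op OMod (VInt a) (VInt b) = Some (VInt (a mod b))"
| "eval_op OEq (VInt a) (VInt b) = Some (VBool (a = b))"
| "eval_op ONeq (VInt a) (VInt b) = Some (VBool (a \<noteq> b))"
| "eval_op OLt (VInt a) (VInt b) = Some (VBool (a < b))"
| "eval_op OGt (VInt a) (VInt b) = Some (VBool (a > b))"
| "eval_op OAnd (VBool a) (VBool b) = Some (VBool (a \<and> b))"
| "eval_op OOr (VBool a) (VBool b) = Some (VBool (a \<or> b))"
| "eval_op _ _ _ = None"

type_synonym prog = "fname \<Rightarrow> var \<times> expr"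

type_synonym env = "var \<Rightarrow> val option"

record costs =
  Kunit :: rat  Kbool :: rat  Kint :: rat  Knil :: rat  Kvar :: rat  Kop :: rat
  Kapp :: rat  Klet :: rat  Kcond :: rat  Kpair :: rat  KmatchP :: rat  Kcons :: rat
  KmatchN :: rat  KmatchL :: rat

section \<open>Cost semantics  E |-^q_q' e \<Down> v  (all counters nonnegative)\<close>

inductive eval :: "prog \<Rightarrow> costs \<Rightarrow> env \<Rightarrow> rat \<Rightarrow> rat \<Rightarrow> expr \<Rightarrow> val \<Rightarrow> bool" where
  E_unit: "0 \<le> q \<Longrightarrow> 0 \<le> q + Kunit K \<Longrightarrow> eval P K E (q + Kunit K) q EUnit VUnit"
| E_true: "0 \<le> q \<Longrightarrow> 0 \<le> q + Kbool K \<Longrightarrow> eval P K E (q + Kbool K) q ETrue (VBool True)"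
| E_false: "0 \<le> q \<Longrightarrow> 0 \<le> q + Kbool K \<Longrightarrow> eval P K E (q + Kbool K) q EFalse (VBool False)"
| E_int: "0 \<le> q \<Longrightarrow> 0 \<le> q + Kint K \<Longrightarrow> eval P K E (q + Kint K) q (EInt n) (VInt n)"
| E_nil: "0 \<le> q \<Longrightarrow> 0 \<le> q + Knil K \<Longrightarrow> eval P K E (q + Knil K) q ENil (VList [])"
| E_var: "E x = Some w \<Longrightarrow> 0 \<le> q \<Longrightarrow> 0 \<le> q + Kvar K \<Longrightarrow> eval P K E (q + Kvar K) q (EVar x) w"
| E_op: "E x1 = Some w1 \<Longrightarrow> E x2 = Some w2 \<Longrightarrow> eval_op bop w1 w2 = Some w \<Longrightarrow>
    0 \<le> q \<Longrightarrow> 0 \<le> q + Kop K \<Longrightarrow> eval P K E (q + Kop K) q (EOp bop x1 x2) w"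
| E_pair: "E x1 = Some w1 \<Longrightarrow> E x2 = Some w2 \<Longrightarrow>
    0 \<le> q \<Longrightarrow> 0 \<le> q + Kpair K \<Longrightarrow> eval P K E (q + Kpair K) q (EPair x1 x2) (VPair w1 w2)"
| E_cons: "E xh = Some w \<Longrightarrow> E xt = Some (VList ws) \<Longrightarrow>
    0 \<le> q \<Longrightarrow> 0 \<le> q + Kcons K \<Longrightarrow> eval P K E (q + Kcons K) q (ECons xh xt) (VList (w # ws))"
| E_app: "P f = (y, ef) \<Longrightarrow> E x = Some w \<Longrightarrow> eval P K (E(y \<mapsto> w)) q q' ef v \<Longrightarrow>
    0 \<le> q + Kapp K \<Longrightarrow> eval P K E (q + Kapp K) q' (EApp f x) v"
| E_let: "eval P K E (q - Klet K) q1 e1 v1 \<Longrightarrow> eval P K (E(x \<mapsto> v1)) q1 q' e2 v \<Longrightarrow>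
    0 \<le> q \<Longrightarrow> eval P K E q q' (ELet x e1 e2) v"
| E_if_true: "E x = Some (VBool True) \<Longrightarrow> eval P K E (q - Kcond K) q' et v \<Longrightarrow>
    0 \<le> q \<Longrightarrow> eval P K E q q' (EIf x et ef) v"
| E_if_false: "E x = Some (VBool False) \<Longrightarrow> eval P K E (q - Kcond K) q' ef v \<Longrightarrow>
    0 \<le> q \<Longrightarrow> eval P K E q q' (EIf x et ef) v"
| E_matchP: "E x = Some (VPair w1 w2) \<Longrightarrow> eval P K (E(x1 \<mapsto> w1, x2 \<mapsto> w2)) (q - KmatchP K) q' e v \<Longrightarrow>
    0 \<le> q \<Longrightarrow> eval P K E q q' (EMatchP x x1 x2 e) v"
| E_matchN: "E x = Some (VList []) \<Longrightarrow> eval P K E (q - KmatchN K) q' e1 v \<Longrightarrow>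
    0 \<le> q \<Longrightarrow> eval P K E q q' (EMatchL x e1 xh xt e2) v"
| E_matchL: "E x = Some (VList (w # ws)) \<Longrightarrow>
    eval P K (E(xh \<mapsto> w, xt \<mapsto> VList ws)) (q - KmatchL K) q' e2 v \<Longrightarrow>
    0 \<le> q \<Longrightarrow> eval P K E q q' (EMatchL x e1 xh xt e2) v"
| E_share: "E x = Some w \<Longrightarrow> eval P K ((E(x := None))(x1 \<mapsto> w, x2 \<mapsto> w)) q q' e v \<Longrightarrow>
    eval P K E q q' (EShare x x1 x2 e) v"

inductive size_eq :: "val \<Rightarrow> val \<Rightarrow> bool" where
  "T \<in> {TUnit, TBool, TInt} \<Longrightarrow> vty v T \<Longrightarrow> vty u T \<Longrightarrow> size_eq v u"
| "size_eq v1 u1 \<Longrightarrow> size_eq v2 u2 \<Longrightarrow> size_eq (VPair v1 v2) (VPair u1 u2)"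
| "length vs = length us \<Longrightarrow> (\<forall>i < length vs. size_eq (vs ! i) (us ! i)) \<Longrightarrow>
    size_eq (VList vs) (VList us)"

type_synonym bctx = "var \<Rightarrow> bty option"

definition env_wf :: "env \<Rightarrow> bctx \<Rightarrow> bool" where
  "env_wf E \<Delta> \<longleftrightarrow> (\<forall>x T. \<Delta> x = Some T \<longrightarrow> (\<exists>w. E x = Some w \<and> vty w T))"

definition env_size_eq :: "var set \<Rightarrow> env \<Rightarrow> env \<Rightarrow> bool" where
  "env_size_eq X E1 E2 \<longleftrightarrow> (\<forall>x\<in>X. size_eq (the (E1 x)) (the (E2 x)))"

definition const_res :: "prog \<Rightarrow> costs \<Rightarrow> bctx \<Rightarrow> var set \<Rightarrow> expr \<Rightarrow> bool" where
  "const_res P K \<Delta> X e \<longleftrightarrow>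
     (\<forall>E1 E2 p1 p1' v1 p2 p2' v2.
        env_wf E1 \<Delta> \<longrightarrow> env_wf E2 \<Delta> \<longrightarrow> env_size_eq X E1 E2 \<longrightarrow>
        eval P K E1 p1 p1' e v1 \<longrightarrow> eval P K E2 p2 p2' e v2 \<longrightarrow> p1 - p1' = p2 - p2')"

datatype aty = AUnit | ABool | AInt | AList rat aty | AProd aty aty

fun erase :: "aty \<Rightarrow> bty" where
  "erase AUnit = TUnit" | "erase ABool = TBool" | "erase AInt = TInt"
| "erase (AList p A) = TList (erase A)" | "erase (AProd A B) = TProd (erase A) (erase B)"

fun ann_ok :: "aty \<Rightarrow> bool" where
  "ann_ok (AList p A) \<longleftrightarrow> 0 \<le> p \<and> ann_ok A"
| "ann_ok (AProd A B) \<longleftrightarrow> ann_ok A \<and> ann_ok B"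
| "ann_ok _ \<longleftrightarrow> True"

type_synonym actx = "var \<Rightarrow> aty option"

definition erase_ctx :: "actx \<Rightarrow> bctx" where
  "erase_ctx \<Gamma> = map_option erase \<circ> \<Gamma>"

definition ctx_ok :: "actx \<Rightarrow> bool" where
  "ctx_ok \<Gamma> \<longleftrightarrow> (\<forall>x A. \<Gamma> x = Some A \<longrightarrow> ann_ok A)"

text \<open>Side condition: every annotation in the conclusion of a rule instance is nonnegative
  (premises are covered by their own rule instances).\<close>
definition okj :: "actx \<Rightarrow> rat \<Rightarrow> rat \<Rightarrow> aty \<Rightarrow> bool" where
  "okj \<Gamma> q q' A \<longleftrightarrow> ctx_ok \<Gamma> \<and> ann_ok A \<and> 0 \<le> q \<and> 0 \<le> q'"

inductive share_rel :: "aty \<Rightarrow> aty \<Rightarrow> aty \<Rightarrow> bool" where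
  "share_rel AUnit AUnit AUnit"
| "share_rel ABool ABool ABool"
| "share_rel AInt AInt AInt"
| "share_rel A A1 A2 \<Longrightarrow> share_rel B B1 B2 \<Longrightarrow> share_rel (AProd A B) (AProd A1 B1) (AProd A2 B2)"
| "share_rel A A1 A2 \<Longrightarrow> p = p1 + p2 \<Longrightarrow> share_rel (AList p A) (AList p1 A1) (AList p2 A2)"

text \<open>Signature: function types  A1 --q/q'--> A2  represented as (A1, q, q', A2).\<close>
type_synonym sig = "fname \<Rightarrow> (aty \<times> rat \<times> rat \<times> aty) set"

fun op_sig :: "binop \<Rightarrow> aty \<times> aty" where
  "op_sig OAnd = (ABool, ABool)" | "op_sig OOr = (ABool, ABool)"
| "op_sig OEq = (AInt, ABool)" | "op_sig ONeq = (AInt, ABool)"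
| "op_sig OLt = (AInt, ABool)" | "op_sig OGt = (AInt, ABool)"
| "op_sig OAdd = (AInt, AInt)" | "op_sig OSub = (AInt, AInt)" | "op_sig OMul = (AInt, AInt)"
| "op_sig ODiv = (AInt, AInt)" | "op_sig OMod = (AInt, AInt)"

section \<open>Constant-resource type system  \<Sigma>;\<Gamma> |-^q_q' e : A\<close>

inductive typing :: "costs \<Rightarrow> sig \<Rightarrow> actx \<Rightarrow> rat \<Rightarrow> rat \<Rightarrow> expr \<Rightarrow> aty \<Rightarrow> bool" where
  T_unit: "okj Map.empty (Kunit K) 0 AUnit \<Longrightarrow> typing K \<Sigma> Map.empty (Kunit K) 0 EUnit AUnit"
| T_true: "okj Map.empty (Kbool K) 0 ABool \<Longrightarrow> typing K \<Sigma> Map.empty (Kbool K) 0 ETrue ABool"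
| T_false: "okj Map.empty (Kbool K) 0 ABool \<Longrightarrow> typing K \<Sigma> Map.empty (Kbool K) 0 EFalse ABool"
| T_int: "okj Map.empty (Kint K) 0 AInt \<Longrightarrow> typing K \<Sigma> Map.empty (Kint K) 0 (EInt n) AInt"
| T_nil: "okj Map.empty (Knil K) 0 (AList p A) \<Longrightarrow> typing K \<Sigma> Map.empty (Knil K) 0 ENil (AList p A)"
| T_var: "okj [x \<mapsto> A] (Kvar K) 0 A \<Longrightarrow> typing K \<Sigma> [x \<mapsto> A] (Kvar K) 0 (EVar x) A"
| T_op: "x1 \<noteq> x2 \<Longrightarrow> op_sig bop = (Ta, Tr) \<Longrightarrow> okj [x1 \<mapsto> Ta, x2 \<mapsto> Ta] (Kop K) 0 Tr \<Longrightarrow>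
    typing K \<Sigma> [x1 \<mapsto> Ta, x2 \<mapsto> Ta] (Kop K) 0 (EOp bop x1 x2) Tr"
| T_app: "(A1, q, q', A2) \<in> \<Sigma> f \<Longrightarrow> 0 \<le> q \<Longrightarrow> okj [x \<mapsto> A1] (q + Kapp K) q' A2 \<Longrightarrow>
    typing K \<Sigma> [x \<mapsto> A1] (q + Kapp K) q' (EApp f x) A2"
| T_let: "typing K \<Sigma> \<Gamma>1 (q - Klet K) q1 e1 A1 \<Longrightarrow> typing K \<Sigma> (\<Gamma>2(x \<mapsto> A1)) q1 q' e2 A2 \<Longrightarrow>
    x \<notin> dom \<Gamma>2 \<Longrightarrow> dom \<Gamma>1 \<inter> dom \<Gamma>2 = {} \<Longrightarrow> okj (\<Gamma>1 ++ \<Gamma>2) q q' A2 \<Longrightarrow>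
    typing K \<Sigma> (\<Gamma>1 ++ \<Gamma>2) q q' (ELet x e1 e2) A2"
| T_if: "typing K \<Sigma> \<Gamma> (q - Kcond K) q' et A \<Longrightarrow> typing K \<Sigma> \<Gamma> (q - Kcond K) q' ef A \<Longrightarrow>
    x \<notin> dom \<Gamma> \<Longrightarrow> okj (\<Gamma>(x \<mapsto> ABool)) q q' A \<Longrightarrow>
    typing K \<Sigma> (\<Gamma>(x \<mapsto> ABool)) q q' (EIf x et ef) A"
| T_pair: "x1 \<noteq> x2 \<Longrightarrow> okj [x1 \<mapsto> A1, x2 \<mapsto> A2] (Kpair K) 0 (AProd A1 A2) \<Longrightarrow>
    typing K \<Sigma> [x1 \<mapsto> A1, x2 \<mapsto> A2] (Kpair K) 0 (EPair x1 x2) (AProd A1 A2)"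
| T_matchP: "typing K \<Sigma> (\<Gamma>(x1 \<mapsto> A1, x2 \<mapsto> A2)) (q - KmatchP K) q' e A \<Longrightarrow>
    x1 \<noteq> x2 \<Longrightarrow> x1 \<notin> dom \<Gamma> \<Longrightarrow> x2 \<notin> dom \<Gamma> \<Longrightarrow> x \<notin> dom \<Gamma> \<Longrightarrow>
    okj (\<Gamma>(x \<mapsto> AProd A1 A2)) q q' A \<Longrightarrow>
    typing K \<Sigma> (\<Gamma>(x \<mapsto> AProd A1 A2)) q q' (EMatchP x x1 x2 e) A"
| T_cons: "xh \<noteq> xt \<Longrightarrow> okj [xh \<mapsto> A, xt \<mapsto> AList p A] (p + Kcons K) 0 (AList p A) \<Longrightarrow>
    typing K \<Sigma> [xh \<mapsto> A, xt \<mapsto> AList p A] (p + Kcons K) 0 (ECons xh xt) (AList p A)"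
| T_matchL: "typing K \<Sigma> \<Gamma> (q - KmatchN K) q' e1 B \<Longrightarrow>
    typing K \<Sigma> (\<Gamma>(xh \<mapsto> A, xt \<mapsto> AList p A)) (q + p - KmatchL K) q' e2 B \<Longrightarrow>
    xh \<noteq> xt \<Longrightarrow> xh \<notin> dom \<Gamma> \<Longrightarrow> xt \<notin> dom \<Gamma> \<Longrightarrow> x \<notin> dom \<Gamma> \<Longrightarrow>
    okj (\<Gamma>(x \<mapsto> AList p A)) q q' B \<Longrightarrow>
    typing K \<Sigma> (\<Gamma>(x \<mapsto> AList p A)) q q' (EMatchL x e1 xh xt e2) B"
| T_share: "typing K \<Sigma> (\<Gamma>(x1 \<mapsto> A1, x2 \<mapsto> A2)) q q' e B \<Longrightarrow> share_rel A A1 A2 \<Longrightarrow>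
    x1 \<noteq> x2 \<Longrightarrow> x1 \<notin> dom \<Gamma> \<Longrightarrow> x2 \<notin> dom \<Gamma> \<Longrightarrow> x \<notin> dom \<Gamma> \<Longrightarrow>
    okj (\<Gamma>(x \<mapsto> A)) q q' B \<Longrightarrow>
    typing K \<Sigma> (\<Gamma>(x \<mapsto> A)) q q' (EShare x x1 x2 e) B"
| T_relax: "typing K \<Sigma> \<Gamma> p p' e A \<Longrightarrow> p \<le> q \<Longrightarrow> q - p = q' - p' \<Longrightarrow> okj \<Gamma> q q' A \<Longrightarrow>
    typing K \<Sigma> \<Gamma> q q' e A"
| T_weak: "typing K \<Sigma> \<Gamma> q q' e B \<Longrightarrow> share_rel A A A \<Longrightarrow> x \<notin> dom \<Gamma> \<Longrightarrow>
    okj (\<Gamma>(x \<mapsto> A)) q q' B \<Longrightarrow> typing K \<Sigma> (\<Gamma>(x \<mapsto> A)) q q' e B"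

definition well_typed :: "prog \<Rightarrow> costs \<Rightarrow> sig \<Rightarrow> bool" where
  "well_typed P K \<Sigma> \<longleftrightarrow>
     (\<forall>f A1 q q' A2. (A1, q, q', A2) \<in> \<Sigma> f \<longrightarrow>
        typing K \<Sigma> [fst (P f) \<mapsto> A1] q q' (snd (P f)) A2)"

end

theory Submission
  imports Defs
begin

text \<open>
  The constant-resource system is sound in an exact sense: if \<open>e\<close> evaluates in \<open>E\<close> to \<open>v\<close>
  with counters \<open>a, a'\<close> and has type \<open>A\<close> in \<open>\<Gamma>\<close> with annotations \<open>q, q'\<close>, then
  \<open>a - a' = q - q' + \<Phi>\<^sub>E(\<Gamma>) - \<Phi>(v : A)\<close>. This is an induction on the evaluation with an
  inner induction on the typing derivation: relaxation keeps \<open>q - q'\<close>, and weakening only adds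
  variables of zero potential, because sharing a type with two copies of itself forces all its
  annotations to vanish. For such an \<open>A\<close> the cost of \<open>e\<close> is therefore \<open>q - q' + \<Phi>\<^sub>E(\<Gamma>)\<close>, which
  depends only on the sizes of the values of the variables in \<open>X\<close>: potential is invariant under
  size equivalence, and the remaining variables carry zero potential.
\<close>

fun pot :: "val \<Rightarrow> aty \<Rightarrow> rat" where
  "pot (VList ws) (AList p A) = of_nat (length ws) * p + (\<Sum>w\<leftarrow>ws. pot w A)"
| "pot (VPair a b) (AProd A B) = pot a A + pot b B"
| "pot _ _ = 0"

definition ctx_pot :: "env \<Rightarrow> actx \<Rightarrow> rat" where
  "ctx_pot E \<Gamma> = (\<Sum>x\<in>dom \<Gamma>. pot (the (E x)) (the (\<Gamma> x)))"

text \<open>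
  Rule induction on \<open>typing\<close> presents contexts eta-expanded, so with \<open>fun_upd_apply\<close> the
  simplifier would unfold each context update \<open>\<Gamma>(x \<mapsto> A)\<close> into a lambda-abstraction.
\<close>
declare fun_upd_apply [simp del] fun_upd_same [simp] fun_upd_other [simp]

lemma pot_share_rel: "share_rel A A1 A2 \<Longrightarrow> pot v A = pot v A1 + pot v A2"
proof (induction arbitrary: v rule: share_rel.induct)
  case (4 A A1 A2 B B1 B2)
  then show ?case by (cases v) auto
next
  case (5 A A1 A2 p p1 p2)
  then show ?case by (cases v) (auto simp: algebra_simps sum_list_addf)
qed auto

lemma pot_eq_0_if_self_share: "share_rel A A A \<Longrightarrow> pot v A = 0"
  using pot_share_rel[of A A A v] by simp

lemma pot_eq_if_size_eq: "size_eq v u \<Longrightarrow> pot v A = pot u A"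
proof (induction arbitrary: A rule: size_eq.induct)
  case (1 T v u)
  then have "pot v A = 0" "pot u A = 0"
    by (auto elim: vty.cases)
  then show ?case by simp
next
  case (2 v1 u1 v2 u2)
  then show ?case by (cases A) auto
next
  case (3 vs us)
  then show ?case by (cases A) (auto intro!: arg_cong[where f=sum_list] nth_equalityI)
qed

lemma ctx_pot_empty [simp]: "ctx_pot E Map.empty = 0"
  by (simp add: ctx_pot_def)

lemma ctx_pot_upd:
  "finite (dom \<Gamma>) \<Longrightarrow> x \<notin> dom \<Gamma> \<Longrightarrow> ctx_pot E (\<Gamma>(x \<mapsto> A)) = ctx_pot E \<Gamma> + pot (the (E x)) A"
  unfolding ctx_pot_def by (auto intro!: sum.cong simp: add.commute fun_upd_apply)

lemma ctx_pot_singleton [simp]: "ctx_pot E [x \<mapsto> A] = pot (the (E x)) A"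
  using ctx_pot_upd[of Map.empty x E A] by simp

lemma ctx_pot_weaken:
  "finite (dom \<Gamma>) \<Longrightarrow> x \<notin> dom \<Gamma> \<Longrightarrow> share_rel A A A \<Longrightarrow> ctx_pot E (\<Gamma>(x \<mapsto> A)) = ctx_pot E \<Gamma>"
  by (simp add: ctx_pot_upd pot_eq_0_if_self_share)

lemma ctx_pot_cong: "(\<And>x. x \<in> dom \<Gamma> \<Longrightarrow> E x = E' x) \<Longrightarrow> ctx_pot E \<Gamma> = ctx_pot E' \<Gamma>"
  unfolding ctx_pot_def by (auto intro!: sum.cong)

lemma ctx_pot_env_upd: "x \<notin> dom \<Gamma> \<Longrightarrow> ctx_pot (E(x := w)) \<Gamma> = ctx_pot E \<Gamma>"
  by (rule ctx_pot_cong) (auto simp: fun_upd_apply)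

lemma ctx_pot_map_add:
  assumes "finite (dom \<Gamma>1)" "finite (dom \<Gamma>2)" "dom \<Gamma>1 \<inter> dom \<Gamma>2 = {}"
  shows "ctx_pot E (\<Gamma>1 ++ \<Gamma>2) = ctx_pot E \<Gamma>1 + ctx_pot E \<Gamma>2"
proof -
  have "ctx_pot E (\<Gamma>1 ++ \<Gamma>2) = (\<Sum>x\<in>dom \<Gamma>1 \<union> dom \<Gamma>2. pot (the (E x)) (the ((\<Gamma>1 ++ \<Gamma>2) x)))"
    by (simp add: ctx_pot_def Un_commute)
  also have "\<dots> = ctx_pot E \<Gamma>1 + ctx_pot E \<Gamma>2"
    using assms unfolding ctx_pot_def
    by (simp add: sum.union_disjoint)
      (intro arg_cong2[where f="(+)"] sum.cong; auto simp: map_add_def split: option.splits)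
  finally show ?thesis .
qed

lemma typing_finite_dom: "typing K \<Sigma> \<Gamma> q q' e A \<Longrightarrow> finite (dom \<Gamma>)"
  by (induction rule: typing.induct) (simp_all add: dom_map_add)

definition cost_exact :: "costs \<Rightarrow> sig \<Rightarrow> env \<Rightarrow> rat \<Rightarrow> rat \<Rightarrow> expr \<Rightarrow> val \<Rightarrow> bool" where
  "cost_exact K \<Sigma> E a a' e v \<longleftrightarrow>
     (\<forall>\<Gamma> r r' A. typing K \<Sigma> \<Gamma> r r' e A \<longrightarrow> a - a' = r - r' + ctx_pot E \<Gamma> - pot v A)"

lemma cost_exactI:
  "(\<And>\<Gamma> r r' A. typing K \<Sigma> \<Gamma> r r' e A \<Longrightarrow> a - a' = r - r' + ctx_pot E \<Gamma> - pot v A)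
   \<Longrightarrow> cost_exact K \<Sigma> E a a' e v"
  unfolding cost_exact_def by blast

lemma cost_exactD:
  "cost_exact K \<Sigma> E a a' e v \<Longrightarrow> typing K \<Sigma> \<Gamma> r r' e A \<Longrightarrow>
   a - a' = r - r' + ctx_pot E \<Gamma> - pot v A"
  unfolding cost_exact_def by blast

text \<open>Application is not atomic: its evaluation runs the body of the callee.\<close>
fun atomic :: "expr \<Rightarrow> bool" where
  "atomic (EApp f x) = False"
| "atomic (ELet x e1 e2) = False"
| "atomic (EIf x et ef) = False"
| "atomic (EMatchP x x1 x2 e) = False"
| "atomic (EMatchL x e1 xh xt e2) = False"
| "atomic (EShare x x1 x2 e) = False"
| "atomic _ = True"

lemma op_sig_pot_eq_0:
  assumes "op_sig bop = (Ta, Tr)"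
  shows "pot v Ta = 0" "pot v Tr = 0"
  using assms by (cases bop; cases v; auto)+

lemma cost_exact_atomic:
  assumes "eval P K E a a' e v" "atomic e"
  shows "cost_exact K \<Sigma> E a a' e v"
proof (rule cost_exactI)
  fix \<Gamma> r r' A assume "typing K \<Sigma> \<Gamma> r r' e A"
  then show "a - a' = r - r' + ctx_pot E \<Gamma> - pot v A"
    using assms
  proof (induction arbitrary: a a' v rule: typing.induct)
    case T_op
    then show ?case by (auto elim!: eval.cases simp: ctx_pot_upd op_sig_pot_eq_0)
  next
    case T_cons
    then show ?case by (auto elim!: eval.cases simp: ctx_pot_upd algebra_simps)
  next
    case T_relax
    then show ?case by fastforce
  next
    case T_weak
    then show ?case by (simp add: ctx_pot_weaken typing_finite_dom)
  qed (auto elim!: eval.cases simp: ctx_pot_upd)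
qed

lemma cost_exact_EApp:
  assumes "well_typed P K \<Sigma>" "P f = (y, ef)" "E x = Some w"
    and "cost_exact K \<Sigma> (E(y \<mapsto> w)) a a' ef v"
  shows "cost_exact K \<Sigma> E (a + Kapp K) a' (EApp f x) v"
proof (rule cost_exactI)
  fix \<Gamma> r r' A assume "typing K \<Sigma> \<Gamma> r r' (EApp f x) A"
  then show "a + Kapp K - a' = r - r' + ctx_pot E \<Gamma> - pot v A"
    using assms
  proof (induction K \<Sigma> \<Gamma> r r' "EApp f x" A rule: typing.induct)
    case (T_app A1 q q' A2 \<Sigma> K)
    then have "typing K \<Sigma> [y \<mapsto> A1] q q' ef A2"
      unfolding well_typed_def by (metis fst_conv snd_conv)
    from cost_exactD[OF T_app.prems(4) this] show ?case using T_app.prems(3) by simp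
  qed (auto simp: ctx_pot_weaken typing_finite_dom)
qed

lemma cost_exact_ELet:
  assumes "cost_exact K \<Sigma> E (a - Klet K) a1 e1 v1"
    and "cost_exact K \<Sigma> (E(x \<mapsto> v1)) a1 a' e2 v"
  shows "cost_exact K \<Sigma> E a a' (ELet x e1 e2) v"
proof (rule cost_exactI)
  fix \<Gamma> r r' A assume "typing K \<Sigma> \<Gamma> r r' (ELet x e1 e2) A"
  then show "a - a' = r - r' + ctx_pot E \<Gamma> - pot v A"
    using assms
  proof (induction K \<Sigma> \<Gamma> r r' "ELet x e1 e2" A rule: typing.induct)
    case (T_let K \<Sigma> \<Gamma>1 q q1 A1 \<Gamma>2 q' A2)
    have fin: "finite (dom \<Gamma>1)" "finite (dom \<Gamma>2)"
      using T_let.hyps by (auto dest: typing_finite_dom)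
    have "ctx_pot (E(x \<mapsto> v1)) (\<Gamma>2(x \<mapsto> A1)) = ctx_pot E \<Gamma>2 + pot v1 A1"
      using fin T_let.hyps by (simp add: ctx_pot_upd ctx_pot_env_upd)
    moreover note cost_exactD[OF T_let.prems(1) T_let.hyps(1)]
      and cost_exactD[OF T_let.prems(2) T_let.hyps(3)]
    ultimately show ?case using fin T_let.hyps by (simp add: ctx_pot_map_add)
  qed (auto simp: ctx_pot_weaken typing_finite_dom)
qed

lemma cost_exact_EIf:
  assumes "E x = Some (VBool b)"
    and "cost_exact K \<Sigma> E (a - Kcond K) a' (if b then et else ef) v"
  shows "cost_exact K \<Sigma> E a a' (EIf x et ef) v"
proof (rule cost_exactI)
  fix \<Gamma> r r' A assume "typing K \<Sigma> \<Gamma> r r' (EIf x et ef) A"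
  then show "a - a' = r - r' + ctx_pot E \<Gamma> - pot v A"
    using assms
  proof (induction K \<Sigma> \<Gamma> r r' "EIf x et ef" A rule: typing.induct)
    case (T_if K \<Sigma> \<Gamma> q q' A)
    then have "a - Kcond K - a' = q - Kcond K - q' + ctx_pot E \<Gamma> - pot v A"
      by (cases b) (auto dest: cost_exactD)
    with T_if show ?case by (simp add: ctx_pot_upd typing_finite_dom)
  qed (auto simp: ctx_pot_weaken typing_finite_dom)
qed

lemma cost_exact_EMatchP:
  assumes "E x = Some (VPair w1 w2)"
    and "cost_exact K \<Sigma> (E(x1 \<mapsto> w1, x2 \<mapsto> w2)) (a - KmatchP K) a' e v"
  shows "cost_exact K \<Sigma> E a a' (EMatchP x x1 x2 e) v"
proof (rule cost_exactI)
  fix \<Gamma> r r' A assume "typing K \<Sigma> \<Gamma> r r' (EMatchP x x1 x2 e) A"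
  then show "a - a' = r - r' + ctx_pot E \<Gamma> - pot v A"
    using assms
  proof (induction K \<Sigma> \<Gamma> r r' "EMatchP x x1 x2 e" A rule: typing.induct)
    case (T_matchP K \<Sigma> \<Gamma> A1 A2 q q' A)
    have fin: "finite (dom \<Gamma>)"
      using typing_finite_dom[OF T_matchP.hyps(1)] by simp
    have "ctx_pot (E(x1 \<mapsto> w1, x2 \<mapsto> w2)) (\<Gamma>(x1 \<mapsto> A1, x2 \<mapsto> A2))
        = ctx_pot E \<Gamma> + pot w1 A1 + pot w2 A2"
      using fin T_matchP.hyps by (simp add: ctx_pot_upd ctx_pot_env_upd)
    with cost_exactD[OF T_matchP.prems(2) T_matchP.hyps(1)] show ?case
      using fin T_matchP.hyps T_matchP.prems(1) by (simp add: ctx_pot_upd)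
  qed (auto simp: ctx_pot_weaken typing_finite_dom)
qed

lemma cost_exact_EMatchL_Nil:
  assumes "E x = Some (VList [])"
    and "cost_exact K \<Sigma> E (a - KmatchN K) a' e1 v"
  shows "cost_exact K \<Sigma> E a a' (EMatchL x e1 xh xt e2) v"
proof (rule cost_exactI)
  fix \<Gamma> r r' A assume "typing K \<Sigma> \<Gamma> r r' (EMatchL x e1 xh xt e2) A"
  then show "a - a' = r - r' + ctx_pot E \<Gamma> - pot v A"
    using assms
  proof (induction K \<Sigma> \<Gamma> r r' "EMatchL x e1 xh xt e2" A rule: typing.induct)
    case (T_matchL K \<Sigma> \<Gamma> q q' B A p)
    with cost_exactD[OF T_matchL.prems(2) T_matchL.hyps(1)] show ?case
      by (simp add: ctx_pot_upd typing_finite_dom)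
  qed (auto simp: ctx_pot_weaken typing_finite_dom)
qed

lemma cost_exact_EMatchL_Cons:
  assumes "E x = Some (VList (w # ws))"
    and "cost_exact K \<Sigma> (E(xh \<mapsto> w, xt \<mapsto> VList ws)) (a - KmatchL K) a' e2 v"
  shows "cost_exact K \<Sigma> E a a' (EMatchL x e1 xh xt e2) v"
proof (rule cost_exactI)
  fix \<Gamma> r r' A assume "typing K \<Sigma> \<Gamma> r r' (EMatchL x e1 xh xt e2) A"
  then show "a - a' = r - r' + ctx_pot E \<Gamma> - pot v A"
    using assms
  proof (induction K \<Sigma> \<Gamma> r r' "EMatchL x e1 xh xt e2" A rule: typing.induct)
    case (T_matchL K \<Sigma> \<Gamma> q q' B A p)
    have fin: "finite (dom \<Gamma>)"
      using typing_finite_dom[OF T_matchL.hyps(1)] .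
    have "ctx_pot (E(xh \<mapsto> w, xt \<mapsto> VList ws)) (\<Gamma>(xh \<mapsto> A, xt \<mapsto> AList p A))
        = ctx_pot E \<Gamma> + pot w A + pot (VList ws) (AList p A)"
      using fin T_matchL.hyps by (simp add: ctx_pot_upd ctx_pot_env_upd)
    with cost_exactD[OF T_matchL.prems(2) T_matchL.hyps(3)] show ?case
      using fin T_matchL.hyps T_matchL.prems(1) by (simp add: ctx_pot_upd algebra_simps)
  qed (auto simp: ctx_pot_weaken typing_finite_dom)
qed

lemma cost_exact_EShare:
  assumes "E x = Some w"
    and "cost_exact K \<Sigma> ((E(x := None))(x1 \<mapsto> w, x2 \<mapsto> w)) a a' e v"
  shows "cost_exact K \<Sigma> E a a' (EShare x x1 x2 e) v"
proof (rule cost_exactI)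
  fix \<Gamma> r r' B assume "typing K \<Sigma> \<Gamma> r r' (EShare x x1 x2 e) B"
  then show "a - a' = r - r' + ctx_pot E \<Gamma> - pot v B"
    using assms
  proof (induction K \<Sigma> \<Gamma> r r' "EShare x x1 x2 e" B rule: typing.induct)
    case (T_share K \<Sigma> \<Gamma> A1 A2 q q' B A)
    have fin: "finite (dom \<Gamma>)"
      using typing_finite_dom[OF T_share.hyps(1)] by simp
    have "ctx_pot ((E(x := None))(x1 \<mapsto> w, x2 \<mapsto> w)) (\<Gamma>(x1 \<mapsto> A1, x2 \<mapsto> A2))
        = ctx_pot E \<Gamma> + pot w A"
      using fin T_share.hyps by (simp add: ctx_pot_upd ctx_pot_env_upd pot_share_rel)
    with cost_exactD[OF T_share.prems(2) T_share.hyps(1)] show ?case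
      using fin T_share.hyps T_share.prems(1) by (simp add: ctx_pot_upd)
  qed (auto simp: ctx_pot_weaken typing_finite_dom)
qed

lemma eval_cost_exact:
  "eval P K E a a' e v \<Longrightarrow> well_typed P K \<Sigma> \<Longrightarrow> cost_exact K \<Sigma> E a a' e v"
proof (induction rule: eval.induct)
  case (E_if_true E x P K q q' et v ef)
  then show ?case by (intro cost_exact_EIf[where b = True]) simp_all
next
  case (E_if_false E x P K q q' ef v et)
  then show ?case by (intro cost_exact_EIf[where b = False]) simp_all
qed (auto intro: cost_exact_atomic eval.intros cost_exact_EApp cost_exact_ELet cost_exact_EMatchP
  cost_exact_EMatchL_Nil cost_exact_EMatchL_Cons cost_exact_EShare)

lemma ctx_pot_eq_if_size_eq:
  assumes "env_size_eq X E1 E2"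
    and "\<forall>x \<in> dom \<Gamma> - X. share_rel (the (\<Gamma> x)) (the (\<Gamma> x)) (the (\<Gamma> x))"
  shows "ctx_pot E1 \<Gamma> = ctx_pot E2 \<Gamma>"
  unfolding ctx_pot_def
proof (rule sum.cong)
  fix x assume "x \<in> dom \<Gamma>"
  then show "pot (the (E1 x)) (the (\<Gamma> x)) = pot (the (E2 x)) (the (\<Gamma> x))"
    using assms pot_eq_if_size_eq pot_eq_0_if_self_share unfolding env_size_eq_def
    by (cases "x \<in> X") auto
qed simp

theorem theorem3:
  fixes P :: prog and K :: costs and \<Sigma> :: sig and \<Gamma> :: actx and X :: "var set"
    and E :: env and e :: expr and v :: val and q q' :: rat and A :: aty
  assumes "well_typed P K \<Sigma>"
    and "finite (dom \<Gamma>)"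
    and "X \<subseteq> dom \<Gamma>"
    and "env_wf E (erase_ctx \<Gamma>)"
    and "\<exists>p p'. eval P K E p p' e v"
    and "typing K \<Sigma> \<Gamma> q q' e A"
    and "share_rel A A A"
    and "\<forall>x \<in> dom \<Gamma> - X. share_rel (the (\<Gamma> x)) (the (\<Gamma> x)) (the (\<Gamma> x))"
  shows "const_res P K (erase_ctx \<Gamma>) X e"
  unfolding const_res_def
proof (intro allI impI)
  fix E1 E2 p1 p1' v1 p2 p2' v2
  assume size_eq: "env_size_eq X E1 E2"
    and ev1: "eval P K E1 p1 p1' e v1" and ev2: "eval P K E2 p2 p2' e v2"
  have "p1 - p1' = q - q' + ctx_pot E1 \<Gamma>" "p2 - p2' = q - q' + ctx_pot E2 \<Gamma>"
    using cost_exactD[OF eval_cost_exact[OF ev1 assms(1)] assms(6)]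
      cost_exactD[OF eval_cost_exact[OF ev2 assms(1)] assms(6)] pot_eq_0_if_self_share[OF assms(7)]
    by simp_all
  moreover have "ctx_pot E1 \<Gamma> = ctx_pot E2 \<Gamma>"
    using ctx_pot_eq_if_size_eq[OF size_eq assms(8)] .
  ultimately show "p1 - p1' = p2 - p2'"
    by simp
qed

end
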